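(* For every integer $N\ge 0$ and all $t$: (a) $qt\,\tau^{-1,1}_N(t)\tau^{0,1}_{N+1}(qt)+(1-qtb_1)\tau^{-1,1}_N(qt)\tau^{0,1}_{N+1}(t)-\tau^{-1,2}_N(t)\tau^{0,0}_{N+1}(qt)=0$; (b) $\tau^{-1,1}_N(qt)\tau^{0,1}_{N+1}(t/q)+t(1-q^{-N}b_1)\tau^{0,1}_N(t)\tau^{-1,1}_{N+1}(t)-\tau^{-1,2}_N(t)\tau^{0,0}_{N+1}(t)=0$.
   Context: $q$ is a fixed nonzero complex constant (generic) and $b_1,b_3$ are generic parameters. $\psi(t,b_1,b_3)$ is a function of three variables satisfying, for all values of its arguments: (R1) $\psi(qt,b_1,b_3)=b_1\psi(t,b_1,b_3)+(1-b_1)\psi(qt,b_1/q,b_3)$, (R2) $b_3\psi(qt,b_1,b_3)=\psi(t,b_1,b_3)+(b_3-1)\psi(t,b_1,qb_3)$, (R3) $qtb_1b_3\psi(qt,b_1,b_3)=(qtb_1-1)\psi(t,b_1,b_3)+\psi(t,qb_1,b_3)$, (R4) $qt\psi(qt,b_1,b_3)=(qtb_1-1)\psi(t,b_1,b_3)+\psi(qt,b_1,b_3/q)$. For integers $N\ge 0$, $m,n$: $\tau^{m,n}_N(t)=\det\big(\psi(t,q^{m-j+1}b_1,q^{n+i-1}b_3)\big)_{i,j=1}^N$ for $N\ge1$, and $\tau^{m,n}_0(t)=1$. *)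

theory Defs
  imports Complex_Main "Jordan_Normal_Form.Determinant"
begin

definition psi_relations :: "complex \<Rightarrow> (complex \<Rightarrow> complex \<Rightarrow> complex \<Rightarrow> complex) \<Rightarrow> bool" where
  "psi_relations q psi \<longleftrightarrow>
     (\<forall>t b1 b3.
        psi (q*t) b1 b3 = b1 * psi t b1 b3 + (1 - b1) * psi (q*t) (b1/q) b3
      \<and> b3 * psi (q*t) b1 b3 = psi t b1 b3 + (b3 - 1) * psi t b1 (q*b3)
      \<and> q*t*b1*b3 * psi (q*t) b1 b3 = (q*t*b1 - 1) * psi t b1 b3 + psi t (q*b1) b3
      \<and> q*t * psi (q*t) b1 b3 = (q*t*b1 - 1) * psi t b1 b3 + psi (q*t) b1 (b3/q))"

text \<open>tau^{m,n}_N(t) = det (psi(t, q^{m-j+1} b1, q^{n+i-1} b3))_{i,j=1..N}, tau_0 = 1.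
  Matrix indices are 0-based here: entry (i,j) with i,j < N corresponds to (i+1,j+1).\<close>
definition tau :: "complex \<Rightarrow> (complex \<Rightarrow> complex \<Rightarrow> complex \<Rightarrow> complex) \<Rightarrow> complex \<Rightarrow> complex
                   \<Rightarrow> int \<Rightarrow> int \<Rightarrow> nat \<Rightarrow> complex \<Rightarrow> complex" where
  "tau q psi b1 b3 m n N t =
     (if N = 0 then 1
      else det (mat N N (\<lambda>(i, j). psi t (q powi (m - int j) * b1) (q powi (n + int i) * b3))))"

end

theory Submission
  imports Defs
begin

text \<open>Index the entries \<open>psi_grid s c i j = psi(s, q^-j b1, q^(c+i) b3)\<close>, so that
  \<open>tau^{0,c}_N(s)\<close> is the determinant of the \<open>N \<times> N\<close> corner of this array and
  \<open>tau^{-1,c}_N(s)\<close> the same with the first column dropped. Along a row, (R1) says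
  \<open>psi_grid (q s) c i j - alpha j * psi_grid (q s) c i (j+1) = q^-j b1 * psi_grid s c i j\<close>,
  and (R1) combined with (R4) gives a relation of the same shape, with coefficients
  \<open>gamma s j\<close>, that lowers \<open>c\<close>. Border \<open>N\<close> rows of the array by two extra rows, each a unit
  vector \<open>e_0\<close>, \<open>e_{N+1}\<close> or a row \<open>\<rho>\<close> with \<open>\<rho>_j = h_j \<rho>_{j+1}\<close> for \<open>h = alpha, gamma\<close>:
  the column operations \<open>C_j := C_j - h_j C_{j+1}\<close> evaluate each such determinant as an
  explicit factor times a \<open>tau\<close>. Cramer's rule, in denominator-free form, gives a three-term
  (Pluecker) relation among six bordered determinants; four choices of the borders yield four
  bilinear identities, and (a) and (b) are each a combination of two of them.

  Cancelling the factors needs \<open>b1 \<noteq> 0\<close>, and also \<open>b3 \<noteq> 0\<close> where (R2) is used to put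
  the rows at time \<open>q t\<close> into the span of those at time \<open>t\<close>. If \<open>b1 = 0\<close> or \<open>b3 = 0\<close>,
  then \<open>tau_{N+1}\<close> has two equal columns or rows once \<open>N \<ge> 1\<close>, while for \<open>N = 0\<close> the
  identities are (R4) itself and (R4) minus \<open>t\<close> times (R1) at time \<open>t / q\<close>.\<close>

section \<open>Determinants of functions of two indices\<close>

definition det_fun :: "nat \<Rightarrow> (nat \<Rightarrow> nat \<Rightarrow> 'a :: comm_ring_1) \<Rightarrow> 'a" where
  "det_fun n f = det (mat n n (\<lambda>(i, j). f i j))"

lemma det_fun_cong:
  "(\<And>i j. i < n \<Longrightarrow> j < n \<Longrightarrow> f i j = g i j) \<Longrightarrow> det_fun n f = det_fun n g"
  unfolding det_fun_def by (intro arg_cong[where f = det] eq_matI) auto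

definition skip_index :: "nat \<Rightarrow> nat \<Rightarrow> nat" where
  "skip_index k i = (if i < k then i else Suc i)"

definition cofactor_fun :: "nat \<Rightarrow> (nat \<Rightarrow> nat \<Rightarrow> 'a :: comm_ring_1) \<Rightarrow> nat \<Rightarrow> nat \<Rightarrow> 'a" where
  "cofactor_fun n f k l =
     (-1) ^ (k + l) * det_fun (n - 1) (\<lambda>i j. f (skip_index k i) (skip_index l j))"

lemma cofactor_mat_eq_cofactor_fun:
  "k < n \<Longrightarrow> l < n \<Longrightarrow> cofactor (mat n n (\<lambda>(i, j). f i j)) k l = cofactor_fun n f k l"
  unfolding cofactor_def cofactor_fun_def det_fun_def mat_delete_def skip_index_def
  by (intro arg_cong2[where f = "(*)"] refl arg_cong[where f = det] eq_matI) auto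

lemma det_fun_laplace_row:
  assumes "k < n"
  shows "det_fun n f = (\<Sum>l<n. f k l * cofactor_fun n f k l)"
proof -
  have "det_fun n f = (\<Sum>l<n. mat n n (\<lambda>(i, j). f i j) $$ (k, l) * cofactor (mat n n (\<lambda>(i, j). f i j)) k l)"
    unfolding det_fun_def by (rule laplace_expansion_row[OF _ assms]) simp
  also have "\<dots> = (\<Sum>l<n. f k l * cofactor_fun n f k l)"
    using assms by (intro sum.cong refl) (simp add: cofactor_mat_eq_cofactor_fun)
  finally show ?thesis .
qed

lemma cofactor_fun_upd_row [simp]: "cofactor_fun n (f(k := v)) k l = cofactor_fun n f k l"
  unfolding cofactor_fun_def skip_index_def
  by (intro arg_cong2[where f = "(*)"] refl det_fun_cong) auto

lemma det_fun_upd_row: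
  "k < n \<Longrightarrow> det_fun n (f(k := v)) = (\<Sum>l<n. v l * cofactor_fun n f k l)"
  using det_fun_laplace_row[of k n "f(k := v)"] by simp

lemma cofactor_fun_orthogonal:
  assumes "l < n" "m < n"
  shows "(\<Sum>k<n. f k m * cofactor_fun n f k l) = (if l = m then det_fun n f else 0)"
proof -
  let ?A = "mat n n (\<lambda>(i, j). f i j)"
  have A: "?A \<in> carrier_mat n n" by simp
  have "(\<Sum>k<n. f k m * cofactor_fun n f k l) = (\<Sum>k<n. cofactor ?A k l * f k m)"
    using assms by (intro sum.cong refl) (simp add: cofactor_mat_eq_cofactor_fun)
  also have "\<dots> = (adj_mat ?A * ?A) $$ (l, m)"
    using assms adj_mat(1)[OF A] by (simp add: adj_mat_def scalar_prod_def atLeast0LessThan)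
  also have "\<dots> = (if l = m then det_fun n f else 0)"
    using assms by (simp add: adj_mat(3)[OF A] det_fun_def)
  finally show ?thesis .
qed

text \<open>Cramer's rule writes \<open>v\<close> as the combination of the rows \<open>f k\<close> with coefficients
  \<open>det_fun n (f(k := v)) / det_fun n f\<close>; with the denominator cleared it needs no invertibility.\<close>

lemma det_fun_cramer:
  assumes r: "r < n"
  shows "det_fun n f * det_fun n (g(r := v))
       = (\<Sum>k<n. det_fun n (f(k := v)) * det_fun n (g(r := f k)))"
proof -
  have "(\<Sum>k<n. det_fun n (f(k := v)) * det_fun n (g(r := f k)))
      = (\<Sum>k<n. \<Sum>l<n. \<Sum>m<n. v l * cofactor_fun n f k l * (f k m * cofactor_fun n g r m))"
    using r by (simp add: det_fun_upd_row sum_product)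
  also have "\<dots> = (\<Sum>l<n. \<Sum>m<n. \<Sum>k<n. v l * cofactor_fun n f k l * (f k m * cofactor_fun n g r m))"
    by (subst sum.swap) (rule sum.cong[OF refl], rule sum.swap)
  also have "\<dots> = (\<Sum>l<n. \<Sum>m<n. v l * cofactor_fun n g r m * (\<Sum>k<n. f k m * cofactor_fun n f k l))"
    by (simp add: sum_distrib_left mult_ac)
  also have "\<dots> = (\<Sum>l<n. v l * cofactor_fun n g r l * det_fun n f)"
    by (simp add: cofactor_fun_orthogonal if_distrib sum.delta cong: if_cong)
  also have "\<dots> = det_fun n f * det_fun n (g(r := v))"
    using r by (simp add: det_fun_upd_row sum_distrib_left mult_ac)
  finally show ?thesis by simp
qed

lemma det_fun_upd_row_linear:
  "r < n \<Longrightarrow> det_fun n (g(r := (\<lambda>j. a * u j + b * w j)))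
     = a * det_fun n (g(r := u)) + b * det_fun n (g(r := w))"
  by (simp add: det_fun_upd_row algebra_simps sum.distrib sum_distrib_left)

lemma det_fun_upd_row_repeated:
  assumes "r < n" "k < n" "k \<noteq> r"
  shows "det_fun n (g(r := g k)) = 0"
  unfolding det_fun_def
  by (rule det_identical_rows[of _ n k r]) (use assms in \<open>auto intro!: eq_vecI\<close>)

lemma det_fun_scale_columns: "det_fun n (\<lambda>i j. s j * f i j) = (\<Prod>j<n. s j) * det_fun n f"
proof -
  let ?A = "mat n n (\<lambda>(i, j). f i j)"
  let ?S = "mat n n (\<lambda>(i, j). if i = j then s j else 0)"
  have "mat n n (\<lambda>(i, j). s j * f i j) = ?A * ?S"
    by (rule eq_matI) (auto simp: scalar_prod_def if_distrib sum.delta cong: if_cong)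
  then have "det_fun n (\<lambda>i j. s j * f i j) = det ?A * det ?S"
    unfolding det_fun_def by (simp add: det_mult[of _ n])
  moreover have "det ?S = (\<Prod>j<n. s j)"
    by (subst det_lower_triangular[of n]) (auto simp: prod_list_diag_prod atLeast0LessThan)
  ultimately show ?thesis by (simp add: det_fun_def mult.commute)
qed

definition unit_row :: "nat \<Rightarrow> nat \<Rightarrow> 'a :: zero_neq_one" where
  "unit_row m j = (if j = m then 1 else 0)"

lemma det_fun_last_row_unit:
  "m < Suc n \<Longrightarrow> det_fun (Suc n) (f(n := unit_row m)) = cofactor_fun (Suc n) f n m"
  by (simp add: det_fun_upd_row unit_row_def if_distrib[of "\<lambda>x. x * _"] sum.delta cong: if_cong)

lemma det_fun_last_row_unit_last: "det_fun (Suc n) (f(n := unit_row n)) = det_fun n f"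
  by (simp add: det_fun_last_row_unit cofactor_fun_def power_add[symmetric], intro det_fun_cong)
    (auto simp: skip_index_def)

lemma det_fun_last_row_unit_first:
  "det_fun (Suc n) (f(n := unit_row 0)) = (-1) ^ n * det_fun n (\<lambda>i j. f i (Suc j))"
  unfolding det_fun_last_row_unit[OF zero_less_Suc] cofactor_fun_def
  by (simp, intro arg_cong[where f = "(*) _"] det_fun_cong) (auto simp: skip_index_def)

text \<open>The unimodular column operations \<open>C\<^sub>j := C\<^sub>j - h j * C\<^bsub>j+1\<^esub>\<close>, \<open>j < n\<close>,
  clear the last row except for its final entry.\<close>

lemma det_fun_last_row_recurrent:
  assumes \<rho>: "\<And>j. j < n \<Longrightarrow> \<rho> j = h j * \<rho> (Suc j)"
  shows "det_fun (Suc n) (f(n := \<rho>)) = \<rho> n * det_fun n (\<lambda>i j. f i j - h j * f i (Suc j))"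
proof -
  define F where "F = f(n := \<rho>)"
  define G where "G i j = (if j < n then F i j - h j * F i (Suc j) else F i j)" for i j
  let ?U = "mat (Suc n) (Suc n) (\<lambda>(k, j). if k = j then 1 else if k = Suc j then - h j else 0)"
  have "mat (Suc n) (Suc n) (\<lambda>(i, j). G i j) = mat (Suc n) (Suc n) (\<lambda>(i, j). F i j) * ?U"
  proof (rule eq_matI, goal_cases)
    case (1 i j)
    then have ij: "i < Suc n" "j < Suc n" by simp_all
    have "(mat (Suc n) (Suc n) (\<lambda>(i, j). F i j) * ?U) $$ (i, j)
        = (\<Sum>k<Suc n. (if k = j then F i k else 0) + (if k = Suc j then - h j * F i k else 0))"
      using ij by (auto simp: scalar_prod_def atLeast0LessThan intro!: sum.cong)
    also have "\<dots> = G i j"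
      using ij by (auto simp: sum.distrib G_def less_Suc_eq)
    finally show ?case
      using ij by simp
  qed auto
  moreover have "det ?U = 1"
    by (subst det_lower_triangular[of "Suc n"]) (auto simp: prod_list_diag_prod)
  ultimately have "det_fun (Suc n) F = det_fun (Suc n) G"
    unfolding det_fun_def by (simp add: det_mult[of _ "Suc n"])
  also have "\<dots> = (\<Sum>l<Suc n. if l = n then \<rho> n * cofactor_fun (Suc n) G n l else 0)"
    by (subst det_fun_laplace_row[of n]) (auto simp: G_def F_def \<rho> intro!: sum.cong)
  also have "\<dots> = \<rho> n * cofactor_fun (Suc n) G n n"
    by simp
  also have "cofactor_fun (Suc n) G n n = det_fun n (\<lambda>i j. f i j - h j * f i (Suc j))"
    unfolding cofactor_fun_def
    by (simp add: power_add[symmetric], intro det_fun_cong) (auto simp: G_def F_def skip_index_def)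
  finally show ?thesis
    unfolding F_def .
qed

definition tail_prod :: "(nat \<Rightarrow> 'a :: comm_monoid_mult) \<Rightarrow> nat \<Rightarrow> nat \<Rightarrow> 'a" where
  "tail_prod h m j = (\<Prod>k = j..<m. h k)"

lemma tail_prod_top [simp]: "tail_prod h m m = 1"
  by (simp add: tail_prod_def)

lemma tail_prod_step: "j < m \<Longrightarrow> tail_prod h m j = h j * tail_prod h m (Suc j)"
  by (simp add: tail_prod_def prod.atLeast_Suc_lessThan)

lemma det_fun_last_row_tail_prod:
  "det_fun (Suc m) (g(m := tail_prod h m)) = det_fun m (\<lambda>i j. g i j - h j * g i (Suc j))"
  using det_fun_last_row_recurrent[of m "tail_prod h m" h g] by (simp add: tail_prod_step)

lemma det_fun_three_term:
  assumes "\<And>k. k < N \<Longrightarrow> det_fun (Suc (Suc N)) (g(Suc N := V k)) = 0"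
  shows "det_fun (Suc (Suc N)) (V(N := p, Suc N := r)) * det_fun (Suc (Suc N)) (g(Suc N := v))
       = det_fun (Suc (Suc N)) (V(N := v, Suc N := r)) * det_fun (Suc (Suc N)) (g(Suc N := p))
       + det_fun (Suc (Suc N)) (V(N := p, Suc N := v)) * det_fun (Suc (Suc N)) (g(Suc N := r))"
proof -
  let ?n = "Suc (Suc N)" and ?f = "V(N := p, Suc N := r)"
  have "det_fun ?n ?f * det_fun ?n (g(Suc N := v))
      = (\<Sum>k<?n. det_fun ?n (?f(k := v)) * det_fun ?n (g(Suc N := ?f k)))"
    by (rule det_fun_cramer) simp
  also have "\<dots> = (\<Sum>k<N. det_fun ?n (?f(k := v)) * det_fun ?n (g(Suc N := V k)))
      + det_fun ?n (?f(N := v)) * det_fun ?n (g(Suc N := p))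
      + det_fun ?n (?f(Suc N := v)) * det_fun ?n (g(Suc N := r))"
    by (simp del: fun_upd_apply) simp
  also have "?f(N := v) = V(N := v, Suc N := r)"
    by (simp add: fun_upd_twist)
  also have "?f(Suc N := v) = V(N := p, Suc N := v)"
    by simp
  finally show ?thesis
    by (simp add: assms del: fun_upd_apply)
qed

lemma det_fun_bordered_units:
  "det_fun (Suc (Suc N)) (V(N := unit_row 0, Suc N := unit_row (Suc N)))
     = (-1) ^ N * det_fun N (\<lambda>i j. V i (Suc j))"
  by (simp add: det_fun_last_row_unit_last det_fun_last_row_unit_first)

lemma det_fun_bordered_tail_prod_unit:
  "det_fun (Suc (Suc N)) (V(N := tail_prod h (Suc N), Suc N := unit_row (Suc N)))
     = h N * det_fun N (\<lambda>i j. V i j - h j * V i (Suc j))"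
  using det_fun_last_row_recurrent[of N "tail_prod h (Suc N)" h V]
  by (simp add: det_fun_last_row_unit_last tail_prod_step)

lemma det_fun_bordered_unit_tail_prod:
  "det_fun (Suc (Suc N)) (V(N := unit_row 0, Suc N := tail_prod h (Suc N)))
     = (-1) ^ N * det_fun N (\<lambda>i j. V i (Suc j) - h (Suc j) * V i (Suc (Suc j)))"
proof -
  have "det_fun (Suc (Suc N)) (V(N := unit_row 0, Suc N := tail_prod h (Suc N)))
      = det_fun (Suc N) ((\<lambda>i j. V i j - h j * V i (Suc j))(N := unit_row 0))"
    by (simp add: det_fun_last_row_tail_prod, intro det_fun_cong) (auto simp: unit_row_def)
  then show ?thesis
    by (simp add: det_fun_last_row_unit_first)
qed

section \<open>The functions \<open>tau\<close> and the array of values of \<open>psi\<close>\<close>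

lemma tau_size_0: "tau q psi b1 b3 m n 0 s = 1"
  by (simp add: tau_def)

lemma tau_size_1: "tau q psi b1 b3 m n (Suc 0) s = psi s (q powi m * b1) (q powi n * b3)"
  by (simp add: tau_def det_single)

lemma tau_eq_0_if_degenerate:
  assumes "b1 = 0 \<or> b3 = 0" "2 \<le> M"
  shows "tau q psi b1 b3 m n M s = 0"
proof -
  let ?A = "mat M M (\<lambda>(i, j). psi s (q powi (m - int j) * b1) (q powi (n + int i) * b3))"
  have "det ?A = 0"
  proof (cases "b1 = 0")
    case True
    then show ?thesis
      by (intro det_identical_columns[of ?A M 0 1]) (use assms(2) in \<open>auto intro!: eq_vecI\<close>)
  next
    case False
    then have "b3 = 0"
      using assms(1) by simp
    then show ?thesis
      by (intro det_identical_rows[of ?A M 0 1]) (use assms(2) in \<open>auto intro!: eq_vecI\<close>)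
  qed
  then show ?thesis
    using assms(2) by (simp add: tau_def)
qed

locale contiguous_psi =
  fixes q b1 b3 :: complex and psi :: "complex \<Rightarrow> complex \<Rightarrow> complex \<Rightarrow> complex"
  assumes q_nz: "q \<noteq> 0" and relations: "psi_relations q psi"
begin

abbreviation T :: "int \<Rightarrow> int \<Rightarrow> nat \<Rightarrow> complex \<Rightarrow> complex" where
  "T \<equiv> tau q psi b1 b3"

lemma psi_R1: "psi (q * s) b c = b * psi s b c + (1 - b) * psi (q * s) (b / q) c"
  using relations unfolding psi_relations_def by blast

lemma psi_R2: "c * psi (q * s) b c = psi s b c + (c - 1) * psi s b (q * c)"
  using relations unfolding psi_relations_def by blast

lemma psi_R4: "q * s * psi (q * s) b c = (q * s * b - 1) * psi s b c + psi (q * s) b (c / q)"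
  using relations unfolding psi_relations_def by blast

lemma psi_R14_b3_step: "psi s b c = b * psi s b (c / q) + (1 - b) * (1 - s * b) * psi s (b / q) c"
proof -
  have s: "q * (s / q) = s"
    using q_nz by simp
  define A Z where "A = psi s b c" and "Z = psi (s / q) b c"
  have R1: "A = b * Z + (1 - b) * psi s (b / q) c"
    using psi_R1[of "s / q" b c] by (simp only: s A_def Z_def)
  have R4: "s * A = (s * b - 1) * Z + psi s b (c / q)"
    using psi_R4[of "s / q" b c] by (simp only: s A_def Z_def)
  have "A - (b * psi s b (c / q) + (1 - b) * (1 - s * b) * psi s (b / q) c)
      = (1 - s * b) * (A - (b * Z + (1 - b) * psi s (b / q) c))
        + b * (s * A - ((s * b - 1) * Z + psi s b (c / q)))"
    by (simp add: algebra_simps)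
  then show ?thesis
    using R1 R4 by (simp add: A_def)
qed

lemma psi_R14_time_step: "psi (s / q) b (q * c) + s * (1 - b) * psi s (b / q) (q * c) = psi s b c"
proof -
  have s: "q * (s / q) = s"
    using q_nz by simp
  define A Z where "A = psi s b (q * c)" and "Z = psi (s / q) b (q * c)"
  have R1: "A = b * Z + (1 - b) * psi s (b / q) (q * c)"
    using psi_R1[of "s / q" b "q * c"] by (simp only: s A_def Z_def)
  have R4: "s * A = (s * b - 1) * Z + psi s b c"
    using psi_R4[of "s / q" b "q * c"] q_nz by (simp add: s A_def Z_def)
  have "Z + s * (1 - b) * psi s (b / q) (q * c) - psi s b c
      = (s * A - ((s * b - 1) * Z + psi s b c)) - s * (A - (b * Z + (1 - b) * psi s (b / q) (q * c)))"
    by (simp add: algebra_simps)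
  then show ?thesis
    using R1 R4 by (simp add: Z_def)
qed

definition b1q :: "nat \<Rightarrow> complex" where
  "b1q j = q powi (- int j) * b1"

definition psi_grid :: "complex \<Rightarrow> int \<Rightarrow> nat \<Rightarrow> nat \<Rightarrow> complex" where
  "psi_grid s c i j = psi s (b1q j) (q powi (c + int i) * b3)"

definition alpha :: "nat \<Rightarrow> complex" where
  "alpha j = 1 - b1q j"

definition gamma :: "complex \<Rightarrow> nat \<Rightarrow> complex" where
  "gamma s j = (1 - b1q j) * (1 - s * b1q j)"

lemma b1q_0 [simp]: "b1q 0 = b1"
  by (simp add: b1q_def)

lemma b1q_Suc: "b1q (Suc j) = b1q j / q"
proof -
  have "q powi (- 1 - int j) = q powi (- int j - 1)"
    by (rule arg_cong[where f = "power_int q"]) simp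
  also have "\<dots> = q powi (- int j) / q"
    using q_nz by (simp add: power_int_diff)
  finally have "q powi (- 1 - int j) = q powi (- int j) / q" .
  then show ?thesis
    by (simp add: b1q_def algebra_simps)
qed

lemma q_times_b1q_Suc: "q * b1q (Suc j) = b1q j"
  using q_nz by (simp add: b1q_Suc)

lemma b1q_times_power: "b1q j * q ^ j = b1"
  using q_nz by (simp add: b1q_def power_int_minus)

lemma b1q_eq: "b1q j = b1 / q ^ j"
  using b1q_times_power[of j] q_nz by (simp add: field_simps)

lemma b1q_nonzero: "b1 \<noteq> 0 \<Longrightarrow> b1q j \<noteq> 0"
  using q_nz by (simp add: b1q_def)

lemma prod_b1q_Suc: "(\<Prod>j<Suc N. b1q j) = b1 * (\<Prod>j<N. b1q (Suc j))"
  unfolding prod.lessThan_Suc_shift by simp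

lemma prod_b1q: "(\<Prod>j<N. b1q j) = q ^ N * (\<Prod>j<N. b1q (Suc j))"
proof -
  have "(\<Prod>j<N. b1q j) = (\<Prod>j<N. q * b1q (Suc j))"
    by (simp add: q_times_b1q_Suc)
  then show ?thesis
    by (simp add: prod.distrib)
qed

lemma tau_0_eq_det_fun: "T 0 c N s = det_fun N (psi_grid s c)"
  unfolding tau_def det_fun_def psi_grid_def b1q_def
  by (cases "N = 0") (auto intro!: arg_cong[where f = det] eq_matI)

lemma tau_minus1_eq_det_fun: "T (-1) c N s = det_fun N (\<lambda>i j. psi_grid s c i (Suc j))"
proof -
  have "- 1 - int j = - int (Suc j)" for j
    by simp
  then show ?thesis
    unfolding tau_def det_fun_def psi_grid_def b1q_def
    by (cases "N = 0") (auto intro!: arg_cong[where f = det] eq_matI)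
qed

lemma psi_grid_Suc_row: "psi_grid s c (Suc i) = psi_grid s (c + 1) i"
  by (simp add: psi_grid_def fun_eq_iff add_ac)

lemma psi_grid_R1:
  "psi_grid (q * s) c i j - alpha j * psi_grid (q * s) c i (Suc j) = b1q j * psi_grid s c i j"
  using psi_R1[of s "b1q j"] by (simp add: psi_grid_def alpha_def b1q_Suc)

lemma psi_grid_R2:
  "q powi (c + int i) * b3 * psi_grid (q * s) c i j
     = psi_grid s c i j + (q powi (c + int i) * b3 - 1) * psi_grid s c (Suc i) j"
  using psi_R2[of "q powi (c + int i) * b3" s "b1q j"] q_nz
  by (simp add: psi_grid_def power_int_add mult_ac)

lemma psi_grid_R14:
  "psi_grid s c i j - gamma s j * psi_grid s c i (Suc j) = b1q j * psi_grid s (c - 1) i j"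
proof -
  have "q powi (c + int i) * b3 / q = q powi (c - 1 + int i) * b3"
    using q_nz by (simp add: power_int_diff algebra_simps)
  then show ?thesis
    using psi_R14_b3_step[of s "b1q j" "q powi (c + int i) * b3"]
    by (simp add: psi_grid_def gamma_def b1q_Suc)
qed

section \<open>Bordered determinants and bilinear relations\<close>

lemma det_fun_grid_last_row_unit_first:
  "det_fun (Suc m) ((psi_grid s c)(m := unit_row 0)) = (-1) ^ m * T (-1) c m s"
  by (simp add: det_fun_last_row_unit_first tau_minus1_eq_det_fun)

lemma det_fun_grid_last_row_unit_last:
  "det_fun (Suc m) ((psi_grid s c)(m := unit_row m)) = T 0 c m s"
  by (simp add: det_fun_last_row_unit_last tau_0_eq_det_fun)

lemma det_fun_grid_last_row_alpha:
  "det_fun (Suc m) ((psi_grid (q * s) c)(m := tail_prod alpha m)) = (\<Prod>j<m. b1q j) * T 0 c m s"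
  by (simp add: det_fun_last_row_tail_prod psi_grid_R1 det_fun_scale_columns tau_0_eq_det_fun)

lemma det_fun_grid_last_row_gamma:
  "det_fun (Suc m) ((psi_grid s c)(m := tail_prod (gamma s) m)) = (\<Prod>j<m. b1q j) * T 0 (c - 1) m s"
  by (simp add: det_fun_last_row_tail_prod psi_grid_R14 det_fun_scale_columns tau_0_eq_det_fun)

lemma det_fun_grid_bordered_units:
  "det_fun (Suc (Suc N)) ((psi_grid s c)(N := unit_row 0, Suc N := unit_row (Suc N)))
     = (-1) ^ N * T (-1) c N s"
  by (simp add: det_fun_bordered_units tau_minus1_eq_det_fun)

lemma det_fun_grid_bordered_alpha_unit:
  "det_fun (Suc (Suc N)) ((psi_grid (q * s) c)(N := tail_prod alpha (Suc N), Suc N := unit_row (Suc N)))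
     = alpha N * (\<Prod>j<N. b1q j) * T 0 c N s"
  by (simp add: det_fun_bordered_tail_prod_unit psi_grid_R1 det_fun_scale_columns tau_0_eq_det_fun)

lemma det_fun_grid_bordered_gamma_unit:
  "det_fun (Suc (Suc N)) ((psi_grid s c)(N := tail_prod (gamma s) (Suc N), Suc N := unit_row (Suc N)))
     = gamma s N * (\<Prod>j<N. b1q j) * T 0 (c - 1) N s"
  by (simp add: det_fun_bordered_tail_prod_unit psi_grid_R14 det_fun_scale_columns tau_0_eq_det_fun)

lemma det_fun_grid_bordered_unit_alpha:
  "det_fun (Suc (Suc N)) ((psi_grid (q * s) c)(N := unit_row 0, Suc N := tail_prod alpha (Suc N)))
     = (-1) ^ N * (\<Prod>j<N. b1q (Suc j)) * T (-1) c N s"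
  by (simp add: det_fun_bordered_unit_tail_prod psi_grid_R1 det_fun_scale_columns tau_minus1_eq_det_fun)

lemma det_fun_grid_bordered_unit_gamma:
  "det_fun (Suc (Suc N)) ((psi_grid s c)(N := unit_row 0, Suc N := tail_prod (gamma s) (Suc N)))
     = (-1) ^ N * (\<Prod>j<N. b1q (Suc j)) * T (-1) (c - 1) N s"
  by (simp add: det_fun_bordered_unit_tail_prod psi_grid_R14 det_fun_scale_columns tau_minus1_eq_det_fun)

text \<open>After the column operations for \<open>alpha\<close>, the row \<open>tail_prod (gamma (q * t))\<close> becomes
  a row \<open>\<sigma>\<close> with \<open>\<sigma> j = q * gamma t j * \<sigma> (Suc j)\<close>, so a second round of column operations
  applies.\<close>

lemma det_fun_grid_bordered_gamma_alpha:
  "det_fun (Suc (Suc N))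
     ((psi_grid (q * t) c)(N := tail_prod (gamma (q * t)) (Suc N), Suc N := tail_prod alpha (Suc N)))
   = - (alpha N * q * t) * (\<Prod>j<Suc N. b1q j) * (\<Prod>j<N. b1q j) * T 0 (c - 1) N t"
proof -
  let ?g = "tail_prod (gamma (q * t)) (Suc N)"
  define \<sigma> where "\<sigma> j = ?g j - alpha j * ?g (Suc j)" for j
  have \<sigma>_eq: "\<sigma> j = - (alpha j * q * t * b1q j) * ?g (Suc j)" if "j < Suc N" for j
    using that by (simp add: \<sigma>_def tail_prod_step gamma_def alpha_def algebra_simps)
  have \<sigma>_rec: "\<sigma> j = q * gamma t j * \<sigma> (Suc j)" if "j < N" for j
    using that q_nz
    by (simp add: \<sigma>_eq tail_prod_step[of "Suc j"] gamma_def alpha_def b1q_Suc field_simps)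
  have entry: "b1q j * psi_grid t c i j - q * gamma t j * (b1q (Suc j) * psi_grid t c i (Suc j))
      = b1q j * (b1q j * psi_grid t (c - 1) i j)" for i j
  proof -
    have "b1q j * psi_grid t c i j - q * gamma t j * (b1q (Suc j) * psi_grid t c i (Suc j))
        = b1q j * (psi_grid t c i j - gamma t j * psi_grid t c i (Suc j))"
      using q_nz by (simp add: b1q_Suc algebra_simps)
    then show ?thesis
      by (simp only: psi_grid_R14)
  qed
  have "det_fun (Suc (Suc N)) ((psi_grid (q * t) c)(N := ?g, Suc N := tail_prod alpha (Suc N)))
      = det_fun (Suc N) ((\<lambda>i j. b1q j * psi_grid t c i j)(N := \<sigma>))"
    by (simp add: det_fun_last_row_tail_prod, intro det_fun_cong) (auto simp: \<sigma>_def psi_grid_R1)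
  also have "\<dots> = \<sigma> N * det_fun N (\<lambda>i j. b1q j * psi_grid t c i j
                                   - q * gamma t j * (b1q (Suc j) * psi_grid t c i (Suc j)))"
    by (rule det_fun_last_row_recurrent) (rule \<sigma>_rec)
  also have "\<dots> = \<sigma> N * det_fun N (\<lambda>i j. b1q j * (b1q j * psi_grid t (c - 1) i j))"
    by (simp only: entry)
  also have "\<dots> = - (alpha N * q * t) * (\<Prod>j<Suc N. b1q j) * (\<Prod>j<N. b1q j) * T 0 (c - 1) N t"
    by (simp add: \<sigma>_eq det_fun_scale_columns tau_0_eq_det_fun prod.distrib)
  finally show ?thesis .
qed

lemma det_fun_grid_upd_row_shifted:
  "k < N \<Longrightarrow> det_fun (Suc (Suc N)) ((psi_grid s c)(Suc N := psi_grid s (c + 1) k)) = 0"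
  using det_fun_upd_row_repeated[of "Suc N" "Suc (Suc N)" "Suc k" "psi_grid s c"]
  by (simp add: psi_grid_Suc_row)

lemma det_fun_grid_upd_row_qt:
  assumes "b3 \<noteq> 0" "k < N"
  shows "det_fun (Suc (Suc N)) ((psi_grid t c)(Suc N := psi_grid (q * t) c k)) = 0"
proof -
  define B where "B = q powi (c + int k) * b3"
  have "B \<noteq> 0"
    using assms q_nz by (simp add: B_def)
  then have row: "psi_grid (q * t) c k
      = (\<lambda>j. (1 / B) * psi_grid t c k j + ((B - 1) / B) * psi_grid t c (Suc k) j)"
    using psi_grid_R2[of c k t] by (simp add: fun_eq_iff B_def field_simps)
  have "det_fun (Suc (Suc N)) ((psi_grid t c)(Suc N := psi_grid (q * t) c k))
      = (1 / B) * det_fun (Suc (Suc N)) ((psi_grid t c)(Suc N := psi_grid t c k))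
        + ((B - 1) / B) * det_fun (Suc (Suc N)) ((psi_grid t c)(Suc N := psi_grid t c (Suc k)))"
    unfolding row by (rule det_fun_upd_row_linear) simp
  then show ?thesis
    using assms(2) by (simp add: det_fun_upd_row_repeated)
qed

lemma bilinear_tau_qt:
  assumes "b1 \<noteq> 0"
  shows "b1 * T (-1) 1 N (q * t) * T 0 1 (Suc N) t
       = T (-1) 1 N t * T 0 1 (Suc N) (q * t) - q ^ N * alpha N * T 0 1 N t * T (-1) 1 (Suc N) (q * t)"
proof -
  let ?P = "(-1) ^ N * (\<Prod>j<N. b1q (Suc j))"
  have "?P * (b1 * T (-1) 1 N (q * t) * T 0 1 (Suc N) t)
      = (-1) ^ N * T (-1) 1 N (q * t) * ((\<Prod>j<Suc N. b1q j) * T 0 1 (Suc N) t)"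
    unfolding prod_b1q_Suc by (simp only: mult_ac)
  also have "\<dots> = alpha N * (\<Prod>j<N. b1q j) * T 0 1 N t * ((-1) ^ Suc N * T (-1) 1 (Suc N) (q * t))
        + (-1) ^ N * (\<Prod>j<N. b1q (Suc j)) * T (-1) 1 N t * T 0 1 (Suc N) (q * t)"
    using det_fun_three_term[where N = N and V = "psi_grid (q * t) 1" and g = "psi_grid (q * t) 1"
        and p = "unit_row 0" and r = "unit_row (Suc N)" and v = "tail_prod alpha (Suc N)"]
    by (simp add: det_fun_upd_row_repeated det_fun_grid_bordered_units det_fun_grid_last_row_alpha
        det_fun_grid_bordered_alpha_unit det_fun_grid_last_row_unit_first
        det_fun_grid_last_row_unit_last det_fun_grid_bordered_unit_alpha)
  also have "\<dots> = ?P * (T (-1) 1 N t * T 0 1 (Suc N) (q * t)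
          - q ^ N * alpha N * T 0 1 N t * T (-1) 1 (Suc N) (q * t))"
    unfolding prod_b1q by (simp add: algebra_simps)
  finally show ?thesis
    using assms by (simp add: b1q_nonzero)
qed

lemma bilinear_tau_n:
  assumes "b1 \<noteq> 0"
  shows "b1 * T (-1) 2 N t * T 0 0 (Suc N) t
       = T (-1) 1 N t * T 0 1 (Suc N) t - q ^ N * gamma t N * T 0 1 N t * T (-1) 1 (Suc N) t"
proof -
  let ?P = "(-1) ^ N * (\<Prod>j<N. b1q (Suc j))"
  have "?P * (b1 * T (-1) 2 N t * T 0 0 (Suc N) t)
      = (-1) ^ N * T (-1) 2 N t * ((\<Prod>j<Suc N. b1q j) * T 0 0 (Suc N) t)"
    unfolding prod_b1q_Suc by (simp only: mult_ac)
  also have "\<dots> = gamma t N * (\<Prod>j<N. b1q j) * T 0 1 N t * ((-1) ^ Suc N * T (-1) 1 (Suc N) t)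
        + (-1) ^ N * (\<Prod>j<N. b1q (Suc j)) * T (-1) 1 N t * T 0 1 (Suc N) t"
    using det_fun_three_term[where N = N and V = "psi_grid t 2" and g = "psi_grid t 1"
        and p = "unit_row 0" and r = "unit_row (Suc N)" and v = "tail_prod (gamma t) (Suc N)"]
    by (simp add: det_fun_grid_upd_row_shifted[where c = 1, simplified] det_fun_grid_bordered_units
        det_fun_grid_last_row_gamma det_fun_grid_bordered_gamma_unit det_fun_grid_last_row_unit_first
        det_fun_grid_last_row_unit_last det_fun_grid_bordered_unit_gamma)
  also have "\<dots> = ?P * (T (-1) 1 N t * T 0 1 (Suc N) t
          - q ^ N * gamma t N * T 0 1 N t * T (-1) 1 (Suc N) t)"
    unfolding prod_b1q by (simp add: algebra_simps)
  finally show ?thesis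
    using assms by (simp add: b1q_nonzero)
qed

lemma bilinear_tau_t_div_q:
  assumes "b1 \<noteq> 0" "b3 \<noteq> 0"
  shows "b1 * T (-1) 1 N (q * t) * T 0 1 (Suc N) (t / q)
       = T (-1) 1 N t * T 0 1 (Suc N) t - q ^ N * alpha N * T 0 1 N t * T (-1) 1 (Suc N) t"
proof -
  let ?P = "(-1) ^ N * (\<Prod>j<N. b1q (Suc j))"
  have G_alpha: "det_fun (Suc (Suc N)) ((psi_grid t 1)(Suc N := tail_prod alpha (Suc N)))
      = (\<Prod>j<Suc N. b1q j) * T 0 1 (Suc N) (t / q)"
    using det_fun_grid_last_row_alpha[of "Suc N" "t / q" 1] q_nz by simp
  have "?P * (b1 * T (-1) 1 N (q * t) * T 0 1 (Suc N) (t / q))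
      = (-1) ^ N * T (-1) 1 N (q * t) * ((\<Prod>j<Suc N. b1q j) * T 0 1 (Suc N) (t / q))"
    unfolding prod_b1q_Suc by (simp only: mult_ac)
  also have "\<dots> = alpha N * (\<Prod>j<N. b1q j) * T 0 1 N t * ((-1) ^ Suc N * T (-1) 1 (Suc N) t)
        + (-1) ^ N * (\<Prod>j<N. b1q (Suc j)) * T (-1) 1 N t * T 0 1 (Suc N) t"
    using det_fun_three_term[where N = N and V = "psi_grid (q * t) 1" and g = "psi_grid t 1"
        and p = "unit_row 0" and r = "unit_row (Suc N)" and v = "tail_prod alpha (Suc N)"]
    by (simp add: G_alpha det_fun_grid_upd_row_qt[OF assms(2)] det_fun_grid_bordered_units
        det_fun_grid_bordered_alpha_unit det_fun_grid_last_row_unit_first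
        det_fun_grid_last_row_unit_last det_fun_grid_bordered_unit_alpha)
  also have "\<dots> = ?P * (T (-1) 1 N t * T 0 1 (Suc N) t
          - q ^ N * alpha N * T 0 1 N t * T (-1) 1 (Suc N) t)"
    unfolding prod_b1q by (simp add: algebra_simps)
  finally show ?thesis
    using assms by (simp add: b1q_nonzero)
qed

lemma bilinear_tau_n_qt:
  assumes "b1 \<noteq> 0"
  shows "T (-1) 2 N t * T 0 0 (Suc N) (q * t)
       = T (-1) 1 N (q * t) * T 0 1 (Suc N) t
         + q ^ Suc N * t * alpha N * T 0 1 N t * T (-1) 1 (Suc N) (q * t)"
proof -
  let ?P = "(-1) ^ N * (\<Prod>j<N. b1q (Suc j)) ^ 2 * b1"
  have "?P * (T (-1) 2 N t * T 0 0 (Suc N) (q * t))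
      = (-1) ^ N * (\<Prod>j<N. b1q (Suc j)) * T (-1) 2 N t
          * ((\<Prod>j<Suc N. b1q j) * T 0 0 (Suc N) (q * t))"
    unfolding prod_b1q_Suc by (simp only: mult_ac power2_eq_square)
  also have "\<dots> = - (alpha N * q * t) * (\<Prod>j<Suc N. b1q j) * (\<Prod>j<N. b1q j) * T 0 1 N t
          * ((-1) ^ Suc N * T (-1) 1 (Suc N) (q * t))
        + (-1) ^ N * (\<Prod>j<N. b1q (Suc j)) * T (-1) 1 N (q * t)
          * ((\<Prod>j<Suc N. b1q j) * T 0 1 (Suc N) t)"
    using det_fun_three_term[where N = N and V = "psi_grid (q * t) 2" and g = "psi_grid (q * t) 1"
        and p = "unit_row 0" and r = "tail_prod alpha (Suc N)" and v = "tail_prod (gamma (q * t)) (Suc N)"]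
    by (simp add: det_fun_grid_upd_row_shifted[where c = 1, simplified]
        det_fun_grid_bordered_unit_alpha det_fun_grid_last_row_gamma det_fun_grid_bordered_gamma_alpha
        det_fun_grid_last_row_unit_first det_fun_grid_bordered_unit_gamma det_fun_grid_last_row_alpha)
  also have "\<dots> = ?P * (T (-1) 1 N (q * t) * T 0 1 (Suc N) t
           + q ^ Suc N * t * alpha N * T 0 1 N t * T (-1) 1 (Suc N) (q * t))"
    unfolding prod_b1q_Suc unfolding prod_b1q by (simp add: algebra_simps power2_eq_square)
  finally show ?thesis
    using assms by (simp add: b1q_nonzero)
qed

lemma tau_identity_a:
  "q * t * T (-1) 1 N t * T 0 1 (Suc N) (q * t) + (1 - q * t * b1) * T (-1) 1 N (q * t) * T 0 1 (Suc N) t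
     - T (-1) 2 N t * T 0 0 (Suc N) (q * t) = 0"
proof -
  consider "b1 \<noteq> 0" | "N = 0" | "b1 = 0" "N \<noteq> 0"
    by blast
  then show ?thesis
  proof cases
    case 1
    have "q * t * T (-1) 1 N t * T 0 1 (Suc N) (q * t) + (1 - q * t * b1) * T (-1) 1 N (q * t) * T 0 1 (Suc N) t
          - T (-1) 2 N t * T 0 0 (Suc N) (q * t)
        = q * t * (T (-1) 1 N t * T 0 1 (Suc N) (q * t)
            - q ^ N * alpha N * T 0 1 N t * T (-1) 1 (Suc N) (q * t)
            - b1 * T (-1) 1 N (q * t) * T 0 1 (Suc N) t)"
      unfolding bilinear_tau_n_qt[OF 1] by (simp add: algebra_simps)
    also have "\<dots> = 0"
      using bilinear_tau_qt[OF 1, of N t] by simp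
    finally show ?thesis .
  next
    case 2
    then show ?thesis
      using psi_R4[of t b1 "q * b3"] q_nz by (simp add: tau_size_0 tau_size_1 algebra_simps)
  next
    case 3
    then show ?thesis
      by (simp add: tau_eq_0_if_degenerate)
  qed
qed

lemma tau_identity_b:
  "T (-1) 1 N (q * t) * T 0 1 (Suc N) (t / q) + t * (1 - b1 / q ^ N) * T 0 1 N t * T (-1) 1 (Suc N) t
     - T (-1) 2 N t * T 0 0 (Suc N) t = 0"
proof -
  consider "b1 \<noteq> 0" "b3 \<noteq> 0" | "N = 0" | "b1 = 0 \<or> b3 = 0" "N \<noteq> 0"
    by blast
  then show ?thesis
  proof cases
    case 1
    have "b1 * (T (-1) 1 N (q * t) * T 0 1 (Suc N) (t / q) + t * (1 - b1 / q ^ N) * T 0 1 N t * T (-1) 1 (Suc N) t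
          - T (-1) 2 N t * T 0 0 (Suc N) t)
        = (b1 * T (-1) 1 N (q * t) * T 0 1 (Suc N) (t / q)
            - (T (-1) 1 N t * T 0 1 (Suc N) t - q ^ N * alpha N * T 0 1 N t * T (-1) 1 (Suc N) t))
          - (b1 * T (-1) 2 N t * T 0 0 (Suc N) t
            - (T (-1) 1 N t * T 0 1 (Suc N) t - q ^ N * gamma t N * T 0 1 N t * T (-1) 1 (Suc N) t))"
      using q_nz by (simp add: alpha_def gamma_def b1q_eq field_simps)
    also have "\<dots> = 0"
      using bilinear_tau_t_div_q[OF 1, of N t] bilinear_tau_n[OF 1(1), of N t] by simp
    finally show ?thesis
      using 1 by simp
  next
    case 2
    then show ?thesis
      using psi_R14_time_step[of t b1 b3] q_nz by (simp add: tau_size_0 tau_size_1 power_int_minus field_simps)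
  next
    case 3
    then show ?thesis
      by (simp add: tau_eq_0_if_degenerate)
  qed
qed

end

theorem mainTheorem7:
  fixes q b1 b3 :: complex
    and psi :: "complex \<Rightarrow> complex \<Rightarrow> complex \<Rightarrow> complex"
  assumes q_nz: "q \<noteq> 0"
    and q_generic: "\<And>k::nat. k > 0 \<Longrightarrow> q ^ k \<noteq> 1"
    and b1_generic: "\<And>k::int. b1 \<noteq> q powi k"
    and b3_generic: "\<And>k::int. b3 \<noteq> q powi k"
    and rel: "psi_relations q psi"
  shows "\<forall>(N::nat) (t::complex).
           q*t * tau q psi b1 b3 (-1) 1 N t * tau q psi b1 b3 0 1 (N+1) (q*t)
           + (1 - q*t*b1) * tau q psi b1 b3 (-1) 1 N (q*t) * tau q psi b1 b3 0 1 (N+1) t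
           - tau q psi b1 b3 (-1) 2 N t * tau q psi b1 b3 0 0 (N+1) (q*t) = 0
         \<and> tau q psi b1 b3 (-1) 1 N (q*t) * tau q psi b1 b3 0 1 (N+1) (t/q)
           + t * (1 - b1 / q ^ N) * tau q psi b1 b3 0 1 N t * tau q psi b1 b3 (-1) 1 (N+1) t
           - tau q psi b1 b3 (-1) 2 N t * tau q psi b1 b3 0 0 (N+1) t = 0"
proof -
  interpret contiguous_psi q b1 b3 psi
    using q_nz rel by unfold_locales
  show ?thesis
    using tau_identity_a tau_identity_b by simp
qed

end
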